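(* Let $N\ge1$, $n=\sum_{\nu=1}^N n_\nu$, $m\ge1$. For $\nu=1,\dots,N$ let $Q_\nu\in\mathbb{R}^{n_\nu\times n_\nu}$ be symmetric positive definite, $c_\nu\in\mathbb{R}^{n_\nu}$, and $X_\nu\subseteq\mathbb{R}^{n_\nu}$ nonempty, convex and closed; let $X=X_1\times\dots\times X_N$. Let $a\in\mathbb{R}^m$, $a\ge0$, $Q_y\in\mathbb{R}^{m\times m}$ positive definite diagonal, and $b(x)=B^\top x$, $l(x)=L^\top x$ with $B,L\in\mathbb{R}^{n\times m}$. Let $\varphi(x)=\sum_{i=1}^m a_i\max\{(Q_y^{-1}b(x))_i,l_i(x)\}$ and assume there exist $\rho\ge0$, $\omega_1,\omega_2\in\mathbb{R}$ with $\min\{0,\varphi(x)\}\ge\omega_1\|x\|+\omega_2$ for all $x\in X$ with $\|x\|>\rho$. Then the multi-leader-follower game described in the context has a Nash equilibrium.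
   Context: Notation: $x=(x_1,\dots,x_N)$, $x_\nu\in\mathbb{R}^{n_\nu}$, $x_{-\nu}$ = all components other than $x_\nu$. Multi-leader-follower game: given $x$, the follower solves $\min_{y\in\mathbb{R}^m}\tfrac12 y^\top Q_y y-b(x)^\top y$ s.t. $y\ge l(x)$, with unique solution $y(x)=\max\{Q_y^{-1}b(x),l(x)\}$ (componentwise); leader $\nu$ solves $\min_{x_\nu\in X_\nu}\theta_\nu(x_\nu,x_{-\nu})=\tfrac12 x_\nu^\top Q_\nu x_\nu+c_\nu^\top x_\nu+a^\top y(x)$. A Nash equilibrium is $x^*\in X$ with $\theta_\nu(x^*_\nu,x^*_{-\nu})\le\theta_\nu(x_\nu,x^*_{-\nu})$ for all $x_\nu\in X_\nu$ and all $\nu$. *)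

theory Defs
  imports "HOL-Analysis.Analysis"
begin

text \<open>The leaders' joint decision x lives in real^'k (n = CARD('k) coordinates).
  The map blk assigns each coordinate to a leader (players = finite type 'p,
  N = CARD('p)); leader nu's variable x_nu is the block of coordinates k with
  blk k = nu, identified with the subspace of real^'k of vectors vanishing
  outside that block.\<close>

definition proj :: "('k::finite \<Rightarrow> 'p) \<Rightarrow> 'p \<Rightarrow> real^'k \<Rightarrow> real^'k" where
  "proj blk \<nu> x = (\<chi> k. if blk k = \<nu> then x $ k else 0)"

definition block_space :: "('k::finite \<Rightarrow> 'p) \<Rightarrow> 'p \<Rightarrow> (real^'k) set" where
  "block_space blk \<nu> = {v. \<forall>k. blk k \<noteq> \<nu> \<longrightarrow> v $ k = 0}"

definition follower ::
  "real^'m^'m \<Rightarrow> real^'m^'k \<Rightarrow> real^'m^'k \<Rightarrow> real^'k \<Rightarrow> real^'m" where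
  "follower Qy B L x =
     (\<chi> i. max ((matrix_inv Qy *v (transpose B *v x)) $ i) ((transpose L *v x) $ i))"

definition theta ::
  "('k::finite \<Rightarrow> 'p) \<Rightarrow> ('p \<Rightarrow> real^'k^'k) \<Rightarrow> ('p \<Rightarrow> real^'k) \<Rightarrow> real^'m
   \<Rightarrow> real^'m^'m \<Rightarrow> real^'m^'k \<Rightarrow> real^'m^'k \<Rightarrow> 'p \<Rightarrow> real^'k \<Rightarrow> real" where
  "theta blk Q c a Qy B L \<nu> x =
     (1/2) * (proj blk \<nu> x \<bullet> (Q \<nu> *v proj blk \<nu> x)) + c \<nu> \<bullet> proj blk \<nu> x
     + a \<bullet> follower Qy B L x"

definition Xprod :: "('k::finite \<Rightarrow> 'p) \<Rightarrow> ('p \<Rightarrow> (real^'k) set) \<Rightarrow> (real^'k) set" where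
  "Xprod blk Xs = {x. \<forall>\<nu>. proj blk \<nu> x \<in> Xs \<nu>}"

definition nash_equilibrium ::
  "('k::finite \<Rightarrow> 'p) \<Rightarrow> ('p \<Rightarrow> (real^'k) set) \<Rightarrow> ('p \<Rightarrow> real^'k^'k) \<Rightarrow> ('p \<Rightarrow> real^'k)
   \<Rightarrow> real^'m \<Rightarrow> real^'m^'m \<Rightarrow> real^'m^'k \<Rightarrow> real^'m^'k \<Rightarrow> real^'k \<Rightarrow> bool" where
  "nash_equilibrium blk Xs Q c a Qy B L x \<longleftrightarrow>
     x \<in> Xprod blk Xs \<and>
     (\<forall>\<nu>. \<forall>v \<in> Xs \<nu>.
        theta blk Q c a Qy B L \<nu> x \<le> theta blk Q c a Qy B L \<nu> (x - proj blk \<nu> x + v))"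

end

theory Submission
  imports Defs "HOL-Real_Asymp.Real_Asymp"
begin

text \<open>The game is an exact potential game: a unilateral deviation of leader \<nu> changes
  \<open>\<theta>\<^sub>\<nu>\<close> by exactly as much as it changes the potential
  \<open>P x = (\<Sum>\<^sub>\<nu> 1/2 x\<^sub>\<nu>\<^sup>T Q\<^sub>\<nu> x\<^sub>\<nu> + c\<^sub>\<nu>\<^sup>T x\<^sub>\<nu>) + a\<^sup>T y(x)\<close>, so every global minimiser of \<open>P\<close>
  on \<open>X\<close> is a Nash equilibrium.  \<open>P\<close> is continuous, and on \<open>X\<close> it grows at least like
  \<open>\<kappa>/2 \<parallel>x\<parallel>\<^sup>2 - K \<parallel>x\<parallel> + \<omega>\<^sub>2\<close>: the quadratic part is bounded below by its minimum \<open>\<kappa> > 0\<close>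
  on the unit sphere, and the follower term by the growth hypothesis.  Hence \<open>P\<close> is
  coercive on the closed set \<open>X\<close> and attains its minimum.\<close>

lemma continuous_coercive_attains_inf:
  fixes f :: "'a::{heine_borel, real_normed_vector} \<Rightarrow> real"
  assumes "closed S" "x0 \<in> S" "continuous_on S f"
    and coercive: "\<And>y. y \<in> S \<Longrightarrow> norm y > R \<Longrightarrow> f x0 < f y"
  shows "\<exists>x\<in>S. \<forall>y\<in>S. f x \<le> f y"
proof -
  define K where "K = S \<inter> cball 0 (max R (norm x0))"
  have "compact K" "x0 \<in> K"
    using assms(1,2) by (auto simp: K_def closed_Int_compact)
  moreover have "continuous_on K f"
    using assms(3) by (rule continuous_on_subset) (simp add: K_def)
  ultimately obtain x where "x \<in> K" and x_min: "\<And>y. y \<in> K \<Longrightarrow> f x \<le> f y"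
    using continuous_attains_inf[of K f] by blast
  have "f x \<le> f y" if "y \<in> S" for y
  proof (cases "norm y \<le> max R (norm x0)")
    case True
    then show ?thesis using that x_min by (simp add: K_def)
  next
    case False
    then have "R < norm y" by simp
    then show ?thesis using coercive[OF that] x_min[OF \<open>x0 \<in> K\<close>] by simp
  qed
  with \<open>x \<in> K\<close> show ?thesis by (auto simp: K_def)
qed

lemma quadratic_minorant_coercive:
  fixes f :: "'a::real_normed_vector \<Rightarrow> real"
  assumes "\<alpha> > 0"
    and minorant: "\<And>y. y \<in> S \<Longrightarrow> norm y > \<rho> \<Longrightarrow> \<alpha> * (norm y)\<^sup>2 - \<beta> * norm y + \<gamma> \<le> f y"
  shows "\<exists>R. \<forall>y\<in>S. norm y > R \<longrightarrow> M < f y"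
proof -
  have "filterlim (\<lambda>t. \<alpha> * t\<^sup>2 - \<beta> * t + \<gamma>) at_top at_top"
    using \<open>\<alpha> > 0\<close> by real_asymp
  then have "eventually (\<lambda>t. M < \<alpha> * t\<^sup>2 - \<beta> * t + \<gamma>) at_top"
    by (simp add: filterlim_at_top_dense)
  then obtain T where T: "\<And>t. t \<ge> T \<Longrightarrow> M < \<alpha> * t\<^sup>2 - \<beta> * t + \<gamma>"
    by (auto simp: eventually_at_top_linorder)
  have "M < f y" if "y \<in> S" "norm y > max \<rho> T" for y
    using T[of "norm y"] minorant[of y] that by simp
  then show ?thesis by blast
qed

lemma homogeneous2_lower_bound:
  fixes g :: "'a::euclidean_space \<Rightarrow> real"
  assumes "continuous_on UNIV g"
    and pos: "\<And>x. x \<noteq> 0 \<Longrightarrow> g x > 0"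
    and homogeneous: "\<And>t x. g (t *\<^sub>R x) = t\<^sup>2 * g x"
  shows "\<exists>\<kappa>>0. \<forall>x. \<kappa> * (norm x)\<^sup>2 \<le> g x"
proof -
  have "sphere (0::'a) 1 \<noteq> {}"
    by (simp add: sphere_eq_empty)
  moreover have "continuous_on (sphere 0 1) g"
    using assms(1) by (rule continuous_on_subset) simp
  ultimately obtain z where z: "z \<in> sphere 0 1" and z_min: "\<forall>y\<in>sphere 0 1. g z \<le> g y"
    using continuous_attains_inf[OF compact_sphere] by blast
  have "g z > 0"
    using z by (intro pos) auto
  moreover have "g z * (norm x)\<^sup>2 \<le> g x" for x
  proof (cases "x = 0")
    case True
    then show ?thesis using homogeneous[of 0 x] by simp
  next
    case False
    then have "g z \<le> g (inverse (norm x) *\<^sub>R x)"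
      using z_min by simp
    then have "g z * (norm x)\<^sup>2 \<le> (norm x)\<^sup>2 * g (inverse (norm x) *\<^sub>R x)"
      by (metis mult.commute mult_right_mono zero_le_power2)
    also have "\<dots> = g x"
      using False by (simp add: homogeneous power2_eq_square field_simps)
    finally show ?thesis .
  qed
  ultimately show ?thesis by blast
qed

lemma linear_proj: "linear (proj blk \<nu>)"
  by (rule linearI) (auto simp: proj_def vec_eq_iff)

lemmas continuous_on_proj [continuous_intros] =
  linear_continuous_on_compose[OF _ linear_proj]

lemmas continuous_on_matrix_vector_mult [continuous_intros] =
  linear_continuous_on_compose[OF _ matrix_vector_mul_linear]

lemma proj_in_block_space: "proj blk \<nu> x \<in> block_space blk \<nu>"
  by (simp add: proj_def block_space_def)

lemma proj_scaleR: "proj blk \<nu> (t *\<^sub>R x) = t *\<^sub>R proj blk \<nu> x"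
  by (auto simp: proj_def vec_eq_iff)

lemma proj_deviation:
  assumes "v \<in> block_space blk \<nu>"
  shows "proj blk \<mu> (x - proj blk \<nu> x + v) = (if \<mu> = \<nu> then v else proj blk \<mu> x)"
  using assms by (auto simp: proj_def block_space_def vec_eq_iff)

lemma inner_proj_block_space: "c \<in> block_space blk \<nu> \<Longrightarrow> c \<bullet> proj blk \<nu> x = c \<bullet> x"
  by (auto simp: proj_def block_space_def inner_vec_def intro!: sum.cong)

lemma Xprod_deviation:
  assumes "x \<in> Xprod blk Xs" "v \<in> Xs \<nu>" "Xs \<nu> \<subseteq> block_space blk \<nu>"
  shows "x - proj blk \<nu> x + v \<in> Xprod blk Xs"
  using assms proj_deviation[of v blk \<nu> _ x] by (auto simp: Xprod_def)

lemma closed_Xprod: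
  assumes "\<And>\<nu>. closed (Xs \<nu>)"
  shows "closed (Xprod blk Xs)"
proof -
  have "Xprod blk Xs = (\<Inter>\<nu>. proj blk \<nu> -` Xs \<nu>)"
    by (auto simp: Xprod_def)
  moreover have "closed (proj blk \<nu> -` Xs \<nu>)" for \<nu>
    using assms by (intro closed_vimage continuous_on_proj continuous_on_id)
  ultimately show ?thesis by auto
qed

lemma Xprod_nonempty:
  assumes "\<And>\<nu>. Xs \<nu> \<noteq> {}" "\<And>\<nu>. Xs \<nu> \<subseteq> block_space blk \<nu>"
  shows "Xprod blk Xs \<noteq> {}"
proof -
  have "\<forall>\<nu>. \<exists>x. x \<in> Xs \<nu>"
    using assms(1) by blast
  then obtain v where v: "\<And>\<nu>. v \<nu> \<in> Xs \<nu>"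
    by metis
  have "proj blk \<nu> (\<chi> k. v (blk k) $ k) = v \<nu>" for \<nu>
    using v assms(2) by (fastforce simp: proj_def block_space_def vec_eq_iff)
  then have "(\<chi> k. v (blk k) $ k) \<in> Xprod blk Xs"
    using v by (simp add: Xprod_def)
  then show ?thesis by blast
qed

lemma continuous_on_follower: "continuous_on S (follower Qy B L)"
  unfolding follower_def matrix_vector_mul_assoc
  by (intro continuous_on_vec_lambda continuous_on_max continuous_on_component
      matrix_vector_mult_linear_continuous_on)

lemma inner_follower:
  "a \<bullet> follower Qy B L x =
     (\<Sum>i\<in>UNIV. a $ i * max ((matrix_inv Qy *v (transpose B *v x)) $ i) ((transpose L *v x) $ i))"
  by (simp add: inner_vec_def follower_def)

definition own_cost ::
  "('k::finite \<Rightarrow> 'p) \<Rightarrow> ('p \<Rightarrow> real^'k^'k) \<Rightarrow> ('p \<Rightarrow> real^'k) \<Rightarrow> 'p \<Rightarrow> real^'k \<Rightarrow> real" where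
  "own_cost blk Q c \<nu> x =
     (1/2) * (proj blk \<nu> x \<bullet> (Q \<nu> *v proj blk \<nu> x)) + c \<nu> \<bullet> proj blk \<nu> x"

definition potential ::
  "('k::finite \<Rightarrow> 'p::finite) \<Rightarrow> ('p \<Rightarrow> real^'k^'k) \<Rightarrow> ('p \<Rightarrow> real^'k) \<Rightarrow> real^'m
   \<Rightarrow> real^'m^'m \<Rightarrow> real^'m^'k \<Rightarrow> real^'m^'k \<Rightarrow> real^'k \<Rightarrow> real" where
  "potential blk Q c a Qy B L x = (\<Sum>\<nu>\<in>UNIV. own_cost blk Q c \<nu> x) + a \<bullet> follower Qy B L x"

lemma theta_own_cost: "theta blk Q c a Qy B L \<nu> x = own_cost blk Q c \<nu> x + a \<bullet> follower Qy B L x"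
  by (simp add: theta_def own_cost_def)

lemma continuous_on_potential: "continuous_on S (potential blk Q c a Qy B L)"
  unfolding potential_def own_cost_def
  by (intro continuous_intros continuous_on_follower)

lemma potential_deviation:
  fixes blk :: "'k::finite \<Rightarrow> 'p::finite" and x :: "real^'k"
  assumes "v \<in> block_space blk \<nu>"
  defines "y \<equiv> x - proj blk \<nu> x + v"
  shows "potential blk Q c a Qy B L y - potential blk Q c a Qy B L x =
         theta blk Q c a Qy B L \<nu> y - theta blk Q c a Qy B L \<nu> x"
proof -
  have "own_cost blk Q c \<mu> y = own_cost blk Q c \<mu> x" if "\<mu> \<noteq> \<nu>" for \<mu>
    using that proj_deviation[OF assms(1)] by (simp add: own_cost_def y_def)
  then have "(\<Sum>\<mu>\<in>UNIV - {\<nu>}. own_cost blk Q c \<mu> y) = (\<Sum>\<mu>\<in>UNIV - {\<nu>}. own_cost blk Q c \<mu> x)"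
    by (intro sum.cong) auto
  then show ?thesis
    by (simp add: potential_def theta_own_cost sum.remove[of UNIV \<nu>])
qed

lemma potential_minimizer_nash_equilibrium:
  assumes "\<And>\<nu>. Xs \<nu> \<subseteq> block_space blk \<nu>" "x \<in> Xprod blk Xs"
    and x_min: "\<And>y. y \<in> Xprod blk Xs \<Longrightarrow> potential blk Q c a Qy B L x \<le> potential blk Q c a Qy B L y"
  shows "nash_equilibrium blk Xs Q c a Qy B L x"
  unfolding nash_equilibrium_def
proof (intro conjI allI ballI)
  fix \<nu> v
  assume "v \<in> Xs \<nu>"
  then show "theta blk Q c a Qy B L \<nu> x \<le> theta blk Q c a Qy B L \<nu> (x - proj blk \<nu> x + v)"
    using x_min[OF Xprod_deviation] potential_deviation[of v blk \<nu> Q c a Qy B L x] assms(1,2)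
    by fastforce
qed (fact assms(2))

lemma block_quadratic_form_lower_bound:
  fixes blk :: "'k::finite \<Rightarrow> 'p::finite"
  assumes Q_pd: "\<And>\<nu> v. v \<in> block_space blk \<nu> \<Longrightarrow> v \<noteq> 0 \<Longrightarrow> v \<bullet> (Q \<nu> *v v) > 0"
  shows "\<exists>\<kappa>>0. \<forall>x. \<kappa> * (norm x)\<^sup>2 \<le> (\<Sum>\<nu>\<in>UNIV. proj blk \<nu> x \<bullet> (Q \<nu> *v proj blk \<nu> x))"
proof (rule homogeneous2_lower_bound)
  have nonneg: "proj blk \<nu> x \<bullet> (Q \<nu> *v proj blk \<nu> x) \<ge> 0" for \<nu> x
    using Q_pd[OF proj_in_block_space, of \<nu> x] by (cases "proj blk \<nu> x = 0") auto
  fix x :: "real^'k"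
  assume "x \<noteq> 0"
  then obtain k where "x $ k \<noteq> 0"
    by (metis vec_eq_iff zero_index)
  then have "proj blk (blk k) x \<noteq> 0"
    by (auto simp: proj_def vec_eq_iff)
  then have "proj blk (blk k) x \<bullet> (Q (blk k) *v proj blk (blk k) x) > 0"
    using Q_pd[OF proj_in_block_space] by blast
  then show "(\<Sum>\<nu>\<in>UNIV. proj blk \<nu> x \<bullet> (Q \<nu> *v proj blk \<nu> x)) > 0"
    by (intro sum_pos2[where i="blk k"]) (auto intro: nonneg)
qed (auto intro!: continuous_intros
      simp: proj_scaleR sum_distrib_left power2_eq_square algebra_simps)

lemma sum_own_cost_eq:
  assumes "\<And>\<nu>. c \<nu> \<in> block_space blk \<nu>"
  shows "(\<Sum>\<nu>\<in>UNIV. own_cost blk Q c \<nu> x) =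
    (\<Sum>\<nu>\<in>UNIV. proj blk \<nu> x \<bullet> (Q \<nu> *v proj blk \<nu> x)) / 2 + (\<Sum>\<nu>\<in>UNIV. c \<nu>) \<bullet> x"
  by (simp add: own_cost_def sum.distrib sum_divide_distrib inner_sum_left
      inner_proj_block_space[OF assms])

theorem mainTheorem5:
  fixes blk :: "'k::finite \<Rightarrow> 'p::finite"
    and Q :: "'p \<Rightarrow> real^'k^'k" and c :: "'p \<Rightarrow> real^'k"
    and Xs :: "'p \<Rightarrow> (real^'k) set"
    and a :: "real^'m::finite" and Qy :: "real^'m^'m"
    and B L :: "real^'m^'k"
    and \<rho> \<omega>1 \<omega>2 :: real
  assumes Q_sym: "\<And>\<nu> j k. blk j = \<nu> \<Longrightarrow> blk k = \<nu> \<Longrightarrow> Q \<nu> $ j $ k = Q \<nu> $ k $ j"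
    and Q_pd: "\<And>\<nu> v. v \<in> block_space blk \<nu> \<Longrightarrow> v \<noteq> 0 \<Longrightarrow> v \<bullet> (Q \<nu> *v v) > 0"
    and c_block: "\<And>\<nu>. c \<nu> \<in> block_space blk \<nu>"
    and X_sub: "\<And>\<nu>. Xs \<nu> \<subseteq> block_space blk \<nu>"
    and X_ne: "\<And>\<nu>. Xs \<nu> \<noteq> {}"
    and X_convex: "\<And>\<nu>. convex (Xs \<nu>)"
    and X_closed: "\<And>\<nu>. closed (Xs \<nu>)"
    and a_nonneg: "\<And>i. a $ i \<ge> 0"
    and Qy_diag: "\<And>i j. i \<noteq> j \<Longrightarrow> Qy $ i $ j = 0"
    and Qy_pos: "\<And>i. Qy $ i $ i > 0"
    and rho_nonneg: "\<rho> \<ge> 0"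
    and growth: "\<And>x. x \<in> Xprod blk Xs \<Longrightarrow> norm x > \<rho> \<Longrightarrow>
        min 0 (\<Sum>i\<in>UNIV. a $ i * max ((matrix_inv Qy *v (transpose B *v x)) $ i)
                                      ((transpose L *v x) $ i)) \<ge> \<omega>1 * norm x + \<omega>2"
  shows "\<exists>x. nash_equilibrium blk Xs Q c a Qy B L x"
proof -
  let ?X = "Xprod blk Xs" and ?P = "potential blk Q c a Qy B L"
  obtain \<kappa> where "\<kappa> > 0" and
    quadratic_bound: "\<And>x. \<kappa> * (norm x)\<^sup>2 \<le> (\<Sum>\<nu>\<in>UNIV. proj blk \<nu> x \<bullet> (Q \<nu> *v proj blk \<nu> x))"
    using block_quadratic_form_lower_bound[of blk Q, OF Q_pd] by blast
  let ?C = "\<Sum>\<nu>\<in>UNIV. c \<nu>"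
  have minorant: "\<kappa> / 2 * (norm x)\<^sup>2 - (norm ?C + \<bar>\<omega>1\<bar>) * norm x + \<omega>2 \<le> ?P x"
    if "x \<in> ?X" "norm x > \<rho>" for x
    using quadratic_bound[of x] growth[OF that] Cauchy_Schwarz_ineq2[of ?C x]
      abs_ge_minus_self[of \<omega>1] mult_right_mono[of "-\<bar>\<omega>1\<bar>" \<omega>1 "norm x"]
    by (simp add: potential_def sum_own_cost_eq[OF c_block] inner_follower abs_le_iff algebra_simps)
  obtain x0 where "x0 \<in> ?X"
    using Xprod_nonempty[OF X_ne X_sub] by blast
  obtain R where "\<And>y. y \<in> ?X \<Longrightarrow> norm y > R \<Longrightarrow> ?P x0 < ?P y"
    using quadratic_minorant_coercive[where S = ?X and \<rho> = \<rho> and M = "?P x0", OF _ minorant]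
      \<open>\<kappa> > 0\<close> by auto
  then obtain x where "x \<in> ?X" "\<forall>y\<in>?X. ?P x \<le> ?P y"
    using continuous_coercive_attains_inf[OF closed_Xprod[OF X_closed] \<open>x0 \<in> ?X\<close>
        continuous_on_potential] by blast
  then show ?thesis
    using potential_minimizer_nash_equilibrium[OF X_sub] by blast
qed

end
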